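(* Let $K$ be any real number field and let $a,b$ be arbitrary nonzero elements of $K$ with $a>0$. Then there exist a generator $g\neq 1$ of $K$ (i.e. $\mathbb{Q}(g)=K$) and $m_1,m_2,m_3,m_4,m_5\in K$ with $m_2\neq m_3$ such that $$\frac{1}{a}\left(\frac{m_1}{m_2-m_3}\right)^2 - \frac{b}{a}\left(\frac{m_4}{m_2-m_3}\right)^2 + b\left(\frac{m_5}{m_2-m_3}\right)^2 = 1 + \frac{2}{g-1}.$$
   Context: A real number field is a field $K\subset\mathbb{R}$ with $[K:\mathbb{Q}]<\infty$. *)

theory Defs
  imports Complex_Main
begin

definition is_real_subfield :: "real set \<Rightarrow> bool" where
  "is_real_subfield F \<longleftrightarrow> 0 \<in> F \<and> 1 \<in> F \<and>
     (\<forall>x\<in>F. \<forall>y\<in>F. x + y \<in> F \<and> x - y \<in> F \<and> x * y \<in> F) \<and>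
     (\<forall>x\<in>F. x \<noteq> 0 \<longrightarrow> inverse x \<in> F)"

text \<open>A real number field: a subfield K of the reals with [K:Q] finite, i.e. K is
  spanned over Q by finitely many elements.\<close>
definition real_number_field :: "real set \<Rightarrow> bool" where
  "real_number_field K \<longleftrightarrow> is_real_subfield K \<and>
     (\<exists>B. finite B \<and> B \<subseteq> K \<and>
        (\<forall>x\<in>K. \<exists>c :: real \<Rightarrow> rat. x = (\<Sum>v\<in>B. of_rat (c v) * v)))"

definition gen_field :: "real \<Rightarrow> real set" where
  "gen_field g = \<Inter>{F. is_real_subfield F \<and> g \<in> F}"

end

theory Submission
  imports Defs "HOL-Computational_Algebra.Fundamental_Theorem_Algebra"
begin

text \<open>
  By the primitive element theorem \<open>K = \<rat>(\<theta>)\<close> with \<open>\<theta> \<noteq> 0\<close>; write \<open>a = h(\<theta>)\<close> with \<open>h \<in> \<rat>[X]\<close>.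
  For all but finitely many rationals \<open>t\<close>, the element \<open>u = a (1 + t \<theta>)\<^sup>2\<close> still generates \<open>K\<close>:
  \<open>\<theta>\<close> is a root both of its minimal polynomial and of \<open>h(X) (1 + t X)\<^sup>2 - u \<in> \<rat>(u)[X]\<close>, for
  generic \<open>t\<close> it is their only common root, and a simple root of the gcd of two polynomials
  over a subfield lies in that subfield.  The Moebius transform \<open>g = (u + 1) / (u - 1)\<close>
  generates the same field, and \<open>m\<^sub>1 = a (1 + t \<theta>)\<close>, \<open>m\<^sub>2 = 1\<close>, \<open>m\<^sub>3 = m\<^sub>4 = m\<^sub>5 = 0\<close> give
  \<open>m\<^sub>1\<^sup>2 / a = u = 1 + 2 / (g - 1)\<close>.
\<close>

locale subfield =
  fixes S :: "'a::field_char_0 set"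
  assumes zero_mem [simp, intro]: "0 \<in> S"
    and one_mem [simp, intro]: "1 \<in> S"
    and add_mem [intro]: "x \<in> S \<Longrightarrow> y \<in> S \<Longrightarrow> x + y \<in> S"
    and mult_mem [intro]: "x \<in> S \<Longrightarrow> y \<in> S \<Longrightarrow> x * y \<in> S"
    and uminus_mem [intro]: "x \<in> S \<Longrightarrow> - x \<in> S"
    and inverse_mem [intro]: "x \<in> S \<Longrightarrow> inverse x \<in> S"
begin

lemma diff_mem [intro]: "x \<in> S \<Longrightarrow> y \<in> S \<Longrightarrow> x - y \<in> S"
  by (metis add_mem uminus_mem diff_conv_add_uminus)

lemma divide_mem [intro]: "x \<in> S \<Longrightarrow> y \<in> S \<Longrightarrow> x / y \<in> S"
  by (metis mult_mem inverse_mem divide_inverse)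

lemma sum_mem [intro]: "(\<And>i. i \<in> A \<Longrightarrow> f i \<in> S) \<Longrightarrow> sum f A \<in> S"
  by (induction A rule: infinite_finite_induct) auto

lemma power_mem [intro]: "x \<in> S \<Longrightarrow> x ^ n \<in> S"
  by (induction n) auto

lemma of_nat_mem [intro]: "of_nat n \<in> S"
  by (induction n) auto

lemma of_int_mem [intro]: "of_int k \<in> S"
  by (cases k rule: int_cases) (auto simp del: of_nat_Suc)

lemma Rats_subset: "\<rat> \<subseteq> S"
  by (auto elim!: Rats_cases')

lemma of_rat_mem [intro]: "of_rat q \<in> S"
  using Rats_subset by auto

end

interpretation Rats: subfield "\<rat> :: 'a::field_char_0 set"
  by unfold_locales auto

definition poly_over :: "'a::zero set \<Rightarrow> 'a poly \<Rightarrow> bool" where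
  "poly_over S p \<longleftrightarrow> (\<forall>i. coeff p i \<in> S)"

lemma poly_over_mono: "poly_over A p \<Longrightarrow> A \<subseteq> B \<Longrightarrow> poly_over B p"
  unfolding poly_over_def by blast

context subfield
begin

lemma poly_over_const [intro]: "c \<in> S \<Longrightarrow> poly_over S [:c:]"
  by (auto simp: poly_over_def coeff_pCons split: nat.split)

lemma poly_over_0 [simp, intro]: "poly_over S 0"
  using poly_over_const[of 0] by simp

lemma poly_over_1 [simp, intro]: "poly_over S 1"
  using poly_over_const[of 1] by (simp add: one_pCons)

lemma poly_over_pCons [intro]: "c \<in> S \<Longrightarrow> poly_over S p \<Longrightarrow> poly_over S (pCons c p)"
  by (auto simp: poly_over_def coeff_pCons split: nat.split)

lemma poly_over_pCons_iff: "poly_over S (pCons c p) \<longleftrightarrow> c \<in> S \<and> poly_over S p"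
  by (auto simp: poly_over_def coeff_pCons split: nat.splits dest: spec[of _ 0] spec[of _ "Suc _"])

lemma poly_over_add [intro]: "poly_over S p \<Longrightarrow> poly_over S q \<Longrightarrow> poly_over S (p + q)"
  by (auto simp: poly_over_def)

lemma poly_over_uminus [intro]: "poly_over S p \<Longrightarrow> poly_over S (- p)"
  by (auto simp: poly_over_def)

lemma poly_over_diff [intro]: "poly_over S p \<Longrightarrow> poly_over S q \<Longrightarrow> poly_over S (p - q)"
  by (auto simp: poly_over_def)

lemma poly_over_mult [intro]: "poly_over S p \<Longrightarrow> poly_over S q \<Longrightarrow> poly_over S (p * q)"
  unfolding poly_over_def coeff_mult by blast

lemma poly_over_smult [intro]: "c \<in> S \<Longrightarrow> poly_over S p \<Longrightarrow> poly_over S (smult c p)"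
  by (auto simp: poly_over_def)

lemma poly_over_monom [intro]: "c \<in> S \<Longrightarrow> poly_over S (monom c n)"
  by (auto simp: poly_over_def)

lemma poly_over_power [intro]: "poly_over S p \<Longrightarrow> poly_over S (p ^ n)"
  by (induction n) auto

lemma poly_over_pderiv [intro]: "poly_over S p \<Longrightarrow> poly_over S (pderiv p)"
  by (auto simp: poly_over_def coeff_pderiv simp del: of_nat_Suc)

lemma poly_over_pcompose [intro]: "poly_over S p \<Longrightarrow> poly_over S q \<Longrightarrow> poly_over S (pcompose p q)"
  by (induction p) (auto simp: pcompose_pCons poly_over_pCons_iff)

lemma poly_over_divmod:
  assumes "poly_over S p" "poly_over S d" "d \<noteq> 0"
  obtains q r where "poly_over S q" "poly_over S r" "p = q * d + r" "r = 0 \<or> degree r < degree d"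
  using assms(1)
proof (induction "degree p" arbitrary: p thesis rule: less_induct)
  case less
  show ?case
  proof (cases "p = 0 \<or> degree p < degree d")
    case True
    then show ?thesis using less.prems by (intro less.prems(1)[of 0 p]) auto
  next
    case False
    define c where "c = lead_coeff p / lead_coeff d"
    define k where "k = degree p - degree d"
    define p' where "p' = p - monom c k * d"
    have "c \<in> S"
      unfolding c_def using less.prems(2) assms(2) by (auto simp: poly_over_def)
    then have p'_over: "poly_over S p'"
      unfolding p'_def using less.prems(2) assms(2) by auto
    have "degree (monom c k * d) \<le> degree p"
      using degree_mult_le[of "monom c k" d] degree_monom_le[of c k] False unfolding k_def by linarith
    then have "degree p' \<le> degree p"
      unfolding p'_def using degree_diff_le by blast
    moreover have "coeff p' (degree p) = 0"
      unfolding p'_def c_def k_def using False assms(3) by (simp add: coeff_monom_mult)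
    ultimately have "p' = 0 \<or> degree p' < degree p"
      by (metis le_neq_implies_less leading_coeff_0_iff)
    then show ?thesis
    proof
      assume "p' = 0"
      then show ?thesis
        using \<open>c \<in> S\<close> by (intro less.prems(1)[of "monom c k" 0]) (auto simp: p'_def)
    next
      assume "degree p' < degree p"
      then obtain q r where "poly_over S q" "poly_over S r" "p' = q * d + r"
        "r = 0 \<or> degree r < degree d"
        using less.hyps p'_over by metis
      then show ?thesis
        using \<open>c \<in> S\<close> by (intro less.prems(1)[of "q + monom c k" r])
          (auto simp: p'_def algebra_simps)
    qed
  qed
qed

lemma poly_over_bezout:
  assumes "poly_over S p" "poly_over S q" "q \<noteq> 0"
  obtains d u v where "poly_over S d" "poly_over S u" "poly_over S v" "d \<noteq> 0"
    "d dvd p" "d dvd q" "d = u * p + v * q"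
  using assms
proof (induction "degree q" arbitrary: p q thesis rule: less_induct)
  case less
  obtain s r where sr: "poly_over S s" "poly_over S r" "p = s * q + r" "r = 0 \<or> degree r < degree q"
    using poly_over_divmod[OF less.prems(2-4)] by blast
  show ?case
  proof (cases "r = 0")
    case True
    then show ?thesis
      using less.prems sr by (intro less.prems(1)[of q 0 1]) auto
  next
    case False
    with sr have "degree r < degree q" by simp
    then obtain d u v where d: "poly_over S d" "poly_over S u" "poly_over S v" "d \<noteq> 0"
      "d dvd q" "d dvd r" "d = u * q + v * r"
      using less.hyps less.prems(3) sr(2) False by blast
    have "d = v * p + (u - v * s) * q"
      using d(7) sr(3) by (simp add: algebra_simps)
    moreover have "d dvd p"
      using d(5,6) sr(3) by auto
    ultimately show ?thesis
      using d sr by (intro less.prems(1)[of d v "u - v * s"]) auto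
  qed
qed

end

lemma simple_common_root_mem:
  fixes S :: "complex set"
  assumes "subfield S" "poly_over S p" "poly_over S g"
    and "poly p \<beta> = 0" "poly g \<beta> = 0" "poly (pderiv g) \<beta> \<noteq> 0"
    and unique: "\<And>z. poly p z = 0 \<Longrightarrow> poly g z = 0 \<Longrightarrow> z = \<beta>"
  shows "\<beta> \<in> S"
proof -
  \<comment> \<open>A Bezout combination \<open>d\<close> of \<open>p\<close> and \<open>g\<close> over \<open>S\<close> has \<open>\<beta>\<close> as its only root, and a simple
    one since \<open>d\<close> divides \<open>g\<close>; so \<open>d\<close> is linear and \<open>\<beta> = - coeff d 0 / coeff d 1 \<in> S\<close>.\<close>
  interpret S: subfield S by fact
  have "g \<noteq> 0"
    using assms(6) by auto
  then obtain d u v where d: "poly_over S d" "d \<noteq> 0" "d dvd p" "d dvd g" "d = u * p + v * g"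
    using S.poly_over_bezout[OF assms(2,3)] by metis
  then have "poly d \<beta> = 0"
    using assms(4,5) by simp
  then obtain e where de: "d = [:-\<beta>, 1:] * e"
    by (metis dvdE poly_eq_0_iff_dvd)
  have "degree e = 0"
  proof (rule ccontr)
    assume "degree e \<noteq> 0"
    then obtain z where z: "poly e z = 0"
      using fundamental_theorem_of_algebra constant_degree by metis
    then have "poly d z = 0"
      using de by simp
    with d(3,4) have "z = \<beta>"
      using unique by (metis dvdE mult_eq_0_iff poly_mult)
    then obtain e' where e': "e = [:-\<beta>, 1:] * e'"
      using z by (metis dvdE poly_eq_0_iff_dvd)
    obtain k where k: "g = d * k"
      using d(4) by (rule dvdE)
    have "g = [:-\<beta>, 1:] * ([:-\<beta>, 1:] * (e' * k))"
      unfolding k de e' by (simp only: mult.assoc)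
    then have "poly (pderiv g) \<beta> = 0"
      by (simp only: pderiv_mult poly_add poly_mult) (simp del: mult_pCons_left)
    with assms(6) show False by blast
  qed
  then obtain c where "e = [:c:]"
    by (rule degree_eq_zeroE)
  with de d(2) have d_linear: "d = [:-\<beta> * c, c:]" and "c \<noteq> 0"
    by auto
  moreover have "- (\<beta> * c) \<in> S" "c \<in> S"
    using d(1) unfolding d_linear by (auto simp: S.poly_over_pCons_iff)
  ultimately have "- (- (\<beta> * c)) / c \<in> S"
    by blast
  with \<open>c \<noteq> 0\<close> show ?thesis
    by simp
qed

definition is_min_poly :: "'a::field set \<Rightarrow> 'a \<Rightarrow> 'a poly \<Rightarrow> bool" where
  "is_min_poly S z m \<longleftrightarrow> poly_over S m \<and> m \<noteq> 0 \<and> poly m z = 0 \<and>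
     (\<forall>m'. poly_over S m' \<and> m' \<noteq> 0 \<and> poly m' z = 0 \<longrightarrow> degree m \<le> degree m')"

lemma is_min_poly_exists:
  assumes "poly_over S p" "p \<noteq> 0" "poly p z = 0"
  obtains m where "is_min_poly S z m"
  using ex_has_least_nat[of "\<lambda>m. poly_over S m \<and> m \<noteq> 0 \<and> poly m z = 0" p degree] assms
  unfolding is_min_poly_def by blast

context subfield
begin

lemma is_min_poly_pderiv_nonzero:
  assumes "is_min_poly S z m"
  shows "poly (pderiv m) z \<noteq> 0"
proof
  assume root: "poly (pderiv m) z = 0"
  have m: "poly_over S m" "m \<noteq> 0" "poly m z = 0"
    using assms by (auto simp: is_min_poly_def)
  have "degree m \<noteq> 0"
    using m by (metis degree_eq_zeroE poly_const_conv pCons_0_0)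
  then have "pderiv m \<noteq> 0"
    by (simp add: pderiv_eq_0_iff)
  then have "degree m \<le> degree (pderiv m)"
    using assms root poly_over_pderiv[OF m(1)] by (auto simp: is_min_poly_def)
  with \<open>degree m \<noteq> 0\<close> show False
    by (simp add: degree_pderiv)
qed

lemma is_min_poly_inverse:
  assumes min: "is_min_poly S z m" and h: "poly_over S h" "poly h z \<noteq> 0"
  obtains h' where "poly_over S h'" "poly h' z * poly h z = 1"
proof -
  have m: "poly_over S m" "m \<noteq> 0" "poly m z = 0"
    using min by (auto simp: is_min_poly_def)
  \<comment> \<open>By minimality \<open>m\<close> is irreducible over \<open>S\<close>, so the common divisor \<open>d\<close> of \<open>h\<close> and \<open>m\<close>,
    which does not vanish at \<open>z\<close>, is a nonzero constant.\<close>
  obtain d u v where d: "poly_over S d" "poly_over S u" "d \<noteq> 0" "d dvd h" "d dvd m"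
    "d = u * h + v * m"
    using poly_over_bezout[OF h(1) m(1,2)] by metis
  have "poly d z \<noteq> 0"
    using d(4) h(2) by (metis dvdE mult_eq_0_iff poly_mult)
  obtain s r where sr: "poly_over S s" "m = s * d + r" "r = 0 \<or> degree r < degree d"
    using poly_over_divmod[OF m(1) d(1,3)] by metis
  have "d dvd m - s * d"
    using d(5) by simp
  then have "d dvd r"
    using sr(2) by simp
  then have "r = 0"
    using sr(3) dvd_imp_degree_le by fastforce
  then have "s \<noteq> 0" "poly s z = 0"
    using sr(2) m(2,3) \<open>poly d z \<noteq> 0\<close> by auto
  then have "degree m \<le> degree s"
    using min sr(1) by (auto simp: is_min_poly_def)
  moreover have "degree m = degree s + degree d"
    using sr(2) \<open>r = 0\<close> \<open>s \<noteq> 0\<close> d(3) by (simp add: degree_mult_eq)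
  ultimately obtain c where "d = [:c:]"
    by (metis add_le_same_cancel1 le_zero_eq degree_eq_zeroE)
  moreover have "poly d z = poly u z * poly h z"
    using d(6) m(3) by simp
  ultimately have "c \<in> S" "c \<noteq> 0" "poly u z * poly h z = c"
    using d(1) \<open>poly d z \<noteq> 0\<close> by (auto simp: poly_over_pCons_iff)
  then show ?thesis
    using d(2) by (intro that[of "smult (inverse c) u"]) (auto simp: field_simps)
qed

lemma subfield_poly_values:
  assumes "is_min_poly S z m"
  shows "subfield {poly h z | h. poly_over S h}" (is "subfield ?V")
proof
  have value_mem: "poly h z \<in> ?V" if "poly_over S h" for h
    using that by blast
  show "0 \<in> ?V" "1 \<in> ?V"
    using value_mem[OF poly_over_0] value_mem[OF poly_over_1] by simp_all
  fix x y assume "x \<in> ?V" "y \<in> ?V"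
  then obtain hx hy where h: "poly_over S hx" "poly_over S hy" "x = poly hx z" "y = poly hy z"
    by blast
  show "x + y \<in> ?V" "x * y \<in> ?V" "- x \<in> ?V"
    using value_mem[OF poly_over_add[OF h(1,2)]] value_mem[OF poly_over_mult[OF h(1,2)]]
      value_mem[OF poly_over_uminus[OF h(1)]] h(3,4) by simp_all
  show "inverse x \<in> ?V"
  proof (cases "x = 0")
    case False
    then obtain h' where "poly_over S h'" "poly h' z * x = 1"
      using is_min_poly_inverse[OF assms h(1)] h(3) by metis
    then show ?thesis
      using value_mem inverse_unique[of x "poly h' z"] by (simp add: mult.commute)
  qed (use \<open>0 \<in> ?V\<close> in simp)
qed

end

lemma ex_of_rat_notin:
  assumes "finite (A :: 'a::field_char_0 set)"
  obtains q where "of_rat q \<notin> A"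
  using Rats_infinite finite_subset[of "\<rat>" A] assms unfolding Rats_def by blast

lemma of_real_of_rat: "of_real (of_rat q) = (of_rat q :: complex)"
  by (cases q) (simp add: of_rat_rat of_real_divide)

lemma subfield_image_of_real:
  assumes "subfield F"
  shows "subfield (of_real ` F :: complex set)"
proof -
  interpret F: subfield F by fact
  show ?thesis
  proof
    show "0 \<in> of_real ` F" "1 \<in> of_real ` F"
      using rev_image_eqI[OF F.zero_mem] rev_image_eqI[OF F.one_mem] by simp_all
    fix x y :: complex assume "x \<in> of_real ` F" "y \<in> of_real ` F"
    then obtain x' y' where x'y': "x' \<in> F" "y' \<in> F" "x = of_real x'" "y = of_real y'"
      by blast
    show "x + y \<in> of_real ` F"
      using x'y' by (intro image_eqI[where x = "x' + y'"]) auto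
    show "x * y \<in> of_real ` F"
      using x'y' by (intro image_eqI[where x = "x' * y'"]) auto
    show "- x \<in> of_real ` F"
      using x'y' by (intro image_eqI[where x = "- x'"]) auto
    show "inverse x \<in> of_real ` F"
      using x'y' by (intro image_eqI[where x = "inverse x'"]) (auto simp: of_real_inverse)
  qed
qed

lemma is_real_subfield_iff_subfield: "is_real_subfield F \<longleftrightarrow> subfield F"
proof
  assume F: "is_real_subfield F"
  show "subfield F"
  proof
    fix x assume "x \<in> F"
    then show "- x \<in> F" "inverse x \<in> F"
      using F unfolding is_real_subfield_def by (metis diff_0, metis inverse_zero)
  qed (use F in \<open>auto simp: is_real_subfield_def\<close>)
next
  assume "subfield F"
  then interpret subfield F .
  show "is_real_subfield F"
    by (auto simp: is_real_subfield_def)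
qed

lemma real_number_field_subfield: "real_number_field K \<Longrightarrow> subfield K"
  by (simp add: real_number_field_def is_real_subfield_iff_subfield)

lemma subfield_gen_field: "subfield (gen_field x)"
  unfolding gen_field_def is_real_subfield_iff_subfield subfield_def by auto

lemma gen_field_self: "x \<in> gen_field x"
  unfolding gen_field_def by auto

lemma gen_field_least: "subfield F \<Longrightarrow> x \<in> F \<Longrightarrow> gen_field x \<subseteq> F"
  unfolding gen_field_def is_real_subfield_iff_subfield by auto

lemma gen_field_eqI: "y \<in> gen_field x \<Longrightarrow> x \<in> gen_field y \<Longrightarrow> gen_field x = gen_field y"
  by (meson gen_field_least subfield_gen_field subset_antisym)

lemma gen_field_add_one: "gen_field (x + 1) = gen_field x"
proof -
  interpret X: subfield "gen_field x" by (rule subfield_gen_field)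
  interpret X': subfield "gen_field (x + 1)" by (rule subfield_gen_field)
  show ?thesis
    using X.add_mem[OF gen_field_self X.one_mem] X'.diff_mem[OF gen_field_self X'.one_mem]
    by (intro gen_field_eqI) simp_all
qed

lemma gen_field_ratio_plus_minus_one:
  assumes "u \<noteq> 1"
  shows "gen_field ((u + 1) / (u - 1)) = gen_field u"
proof (rule gen_field_eqI)
  let ?g = "(u + 1) / (u - 1)"
  interpret U: subfield "gen_field u" by (rule subfield_gen_field)
  interpret G: subfield "gen_field ?g" by (rule subfield_gen_field)
  show "?g \<in> gen_field u"
    using gen_field_self by blast
  have "u = (?g + 1) / (?g - 1)"
    using assms by (simp add: field_simps)
  moreover have "(?g + 1) / (?g - 1) \<in> gen_field ?g"
    using gen_field_self by blast
  ultimately show "u \<in> gen_field ?g"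
    by simp
qed

lemma subfield_vimage_of_real:
  fixes T :: "complex set"
  assumes "subfield T"
  shows "subfield (of_real -` T :: real set)"
proof -
  interpret T: subfield T by fact
  show ?thesis
    by unfold_locales (simp_all add: T.add_mem T.mult_mem T.uminus_mem T.inverse_mem of_real_inverse)
qed

lemma unique_common_root_mem:
  fixes \<theta> :: real and p m :: "complex poly"
  assumes F: "subfield F" and min: "is_min_poly \<rat> (of_real \<theta>) m"
    and p: "poly_over (of_real ` F) p" "poly p (of_real \<theta>) = 0"
    and unique: "\<And>z. poly p z = 0 \<Longrightarrow> poly m z = 0 \<Longrightarrow> z = of_real \<theta>"
  shows "\<theta> \<in> F"
proof -
  interpret S: subfield "of_real ` F :: complex set"
    using subfield_image_of_real[OF F] .
  have "poly_over \<rat> m" and m_root: "poly m (of_real \<theta>) = 0"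
    using min by (auto simp: is_min_poly_def)
  then have "poly_over (of_real ` F) m"
    using poly_over_mono S.Rats_subset by blast
  from simple_common_root_mem[OF S.subfield_axioms p(1) this p(2) m_root
      Rats.is_min_poly_pderiv_nonzero[OF min] unique]
  have "of_real \<theta> \<in> (of_real ` F :: complex set)" .
  then show ?thesis
    by (auto dest: injD[OF inj_of_real])
qed

interpretation real_over_rat: vector_space "\<lambda>(q::rat) (x::real). of_rat q * x"
  by unfold_locales (simp_all add: algebra_simps of_rat_add of_rat_mult)

lemma min_poly_of_power_relation:
  fixes x :: real
  assumes "finite I" "(\<Sum>i\<in>I. of_rat (c i) * x ^ i) = 0" "j \<in> I" "c j \<noteq> 0"
  obtains m :: "complex poly" where "is_min_poly \<rat> (of_real x) m"
proof -
  define p :: "complex poly" where "p = (\<Sum>i\<in>I. monom (of_rat (c i)) i)"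
  have "poly_over \<rat> p"
    unfolding p_def poly_over_def coeff_sum by (auto intro!: Rats_sum)
  moreover have "coeff p j = of_rat (c j)"
    unfolding p_def coeff_sum using assms(1,3) by simp
  then have "p \<noteq> 0"
    using assms(4) by auto
  moreover have "poly p (of_real x) = of_real (\<Sum>i\<in>I. of_rat (c i) * x ^ i)"
    unfolding p_def poly_sum poly_monom by (simp add: of_real_of_rat)
  then have "poly p (of_real x) = 0"
    using assms(2) by simp
  ultimately show ?thesis
    by (rule is_min_poly_exists[OF _ _ _ that])
qed

lemma real_number_field_min_poly:
  assumes K: "real_number_field K" and "x \<in> K"
  obtains m :: "complex poly" where "is_min_poly \<rat> (of_real x) m"
proof -
  obtain B where B: "finite B" "\<forall>y\<in>K. \<exists>c :: real \<Rightarrow> rat. y = (\<Sum>v\<in>B. of_rat (c v) * v)"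
    using K unfolding real_number_field_def by blast
  have K_span: "K \<subseteq> real_over_rat.span B"
  proof
    fix y assume "y \<in> K"
    then obtain c :: "real \<Rightarrow> rat" where "y = (\<Sum>v\<in>B. of_rat (c v) * v)"
      using B(2) by blast
    then show "y \<in> real_over_rat.span B"
      by (simp only:) (intro real_over_rat.span_sum real_over_rat.span_scale real_over_rat.span_base)
  qed
  define N where "N = card B"
  show thesis
  proof (cases "inj_on (\<lambda>i. x ^ i) {..N}")
    case False
    then obtain i j where "i \<noteq> j" "x ^ i = x ^ j"
      unfolding inj_on_def by auto
    then have relation: "(\<Sum>k\<in>{i, j}. of_rat (if k = i then 1 else - 1) * x ^ k) = 0"
      by simp
    obtain m :: "complex poly" where "is_min_poly \<rat> (of_real x) m"
      by (rule min_poly_of_power_relation[OF _ relation insertI1]) simp_all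
    then show thesis
      by (rule that)
  next
    case True
    define P where "P = (\<lambda>i. x ^ i) ` {..N}"
    have "finite P" "card P = Suc N"
      unfolding P_def using card_image[OF True] by simp_all
    moreover have "P \<subseteq> real_over_rat.span B"
      unfolding P_def using K_span subfield.power_mem[OF real_number_field_subfield[OF K] \<open>x \<in> K\<close>] by blast
    ultimately have "real_over_rat.dependent P"
      using real_over_rat.independent_span_bound[OF B(1)] unfolding N_def by (metis Suc_n_not_le_n)
    then obtain u where u: "\<exists>v\<in>P. u v \<noteq> 0" "(\<Sum>v\<in>P. of_rat (u v) * v) = 0"
      using real_over_rat.dependent_finite[OF \<open>finite P\<close>] by blast
    have relation: "(\<Sum>i\<in>{..N}. of_rat (u (x ^ i)) * x ^ i) = 0"
      using u(2) unfolding P_def sum.reindex[OF True] comp_def .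
    obtain j where "j \<in> {..N}" "u (x ^ j) \<noteq> 0"
      using u(1) unfolding P_def by blast
    with relation show thesis
      by (rule min_poly_of_power_relation[OF finite_atMost _ _ _ that])
  qed
qed

lemma primitive_element_pair:
  fixes \<alpha> \<beta> :: real and f g :: "complex poly"
  assumes f: "is_min_poly \<rat> (of_real \<alpha>) f" and g: "is_min_poly \<rat> (of_real \<beta>) g"
  obtains t where "\<alpha> \<in> gen_field (\<alpha> + of_rat t * \<beta>)" "\<beta> \<in> gen_field (\<alpha> + of_rat t * \<beta>)"
proof -
  have f0: "f \<noteq> 0" and g0: "g \<noteq> 0" and "poly_over \<rat> f" "poly f (of_real \<alpha>) = 0"
    using f g by (auto simp: is_min_poly_def)
  \<comment> \<open>A common root \<open>z \<noteq> \<beta>\<close> of \<open>f(\<alpha> + t \<beta> - t X)\<close> and \<open>g\<close> forces \<open>t = (a - \<alpha>) / (\<beta> - z)\<close> for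
    a root \<open>a\<close> of \<open>f\<close>.\<close>
  define Bad where "Bad = (\<lambda>(a, z). (a - of_real \<alpha>) / (of_real \<beta> - z)) `
      ({a. poly f a = 0} \<times> ({z. poly g z = 0} - {of_real \<beta>}))"
  have "finite Bad"
    unfolding Bad_def using poly_roots_finite[OF f0] poly_roots_finite[OF g0] by auto
  then obtain t where t: "of_rat t \<notin> Bad"
    by (rule ex_of_rat_notin)
  define \<gamma> where "\<gamma> = \<alpha> + of_rat t * \<beta>"
  define L where "L = gen_field \<gamma>"
  interpret L: subfield L
    unfolding L_def by (rule subfield_gen_field)
  interpret S: subfield "of_real ` L :: complex set"
    by (rule subfield_image_of_real) (rule L.subfield_axioms)
  define p where "p = pcompose f [:of_real \<gamma>, - of_rat t:]"
  have "\<gamma> \<in> L"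
    unfolding L_def by (rule gen_field_self)
  then have "poly_over (of_real ` L) p"
    unfolding p_def using \<open>poly_over \<rat> f\<close> S.Rats_subset
    by (intro S.poly_over_pcompose S.poly_over_pCons S.poly_over_const S.uminus_mem S.of_rat_mem)
      (auto intro: poly_over_mono)
  moreover have "poly p (of_real \<beta>) = 0"
    unfolding p_def poly_pcompose \<gamma>_def using \<open>poly f (of_real \<alpha>) = 0\<close>
    by (simp flip: of_real_of_rat)
  moreover have "z = of_real \<beta>" if "poly p z = 0" "poly g z = 0" for z
  proof (rule ccontr)
    assume "z \<noteq> of_real \<beta>"
    define a where "a = of_real \<gamma> - of_rat t * z"
    have "poly f a = 0"
      using that(1) unfolding a_def p_def poly_pcompose by (simp add: algebra_simps)
    with that(2) \<open>z \<noteq> of_real \<beta>\<close> have "(a - of_real \<alpha>) / (of_real \<beta> - z) \<in> Bad"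
      unfolding Bad_def by force
    moreover have "a - of_real \<alpha> = of_rat t * (of_real \<beta> - z)"
      unfolding a_def \<gamma>_def by (simp add: algebra_simps flip: of_real_of_rat)
    ultimately show False
      using t \<open>z \<noteq> of_real \<beta>\<close> by simp
  qed
  ultimately have "\<beta> \<in> L"
    by (rule unique_common_root_mem[OF L.subfield_axioms g])
  then have "\<gamma> - of_rat t * \<beta> \<in> L"
    using \<open>\<gamma> \<in> L\<close> by (intro L.diff_mem L.mult_mem L.of_rat_mem)
  then have "\<alpha> \<in> L"
    unfolding \<gamma>_def by simp
  with \<open>\<beta> \<in> L\<close> show thesis
    using that unfolding L_def \<gamma>_def by blast
qed

lemma real_number_field_primitive_element:
  assumes K: "real_number_field K"
  obtains \<theta> where "\<theta> \<noteq> 0" "gen_field \<theta> = K"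
proof -
  obtain B where B: "finite B" "B \<subseteq> K" "\<forall>y\<in>K. \<exists>c :: real \<Rightarrow> rat. y = (\<Sum>v\<in>B. of_rat (c v) * v)"
    using K unfolding real_number_field_def by blast
  interpret K: subfield K
    using real_number_field_subfield[OF K] .
  have "\<exists>\<gamma>\<in>K. T \<subseteq> gen_field \<gamma>" if "finite T" "T \<subseteq> K" for T
    using that
  proof (induction T rule: finite_induct)
    case empty
    then show ?case
      using K.zero_mem by blast
  next
    case (insert x T)
    then obtain \<gamma> where "\<gamma> \<in> K" "T \<subseteq> gen_field \<gamma>" and "x \<in> K"
      by auto
    obtain f :: "complex poly" where "is_min_poly \<rat> (of_real \<gamma>) f"
      using real_number_field_min_poly[OF K \<open>\<gamma> \<in> K\<close>] .
    moreover obtain g :: "complex poly" where "is_min_poly \<rat> (of_real x) g"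
      using real_number_field_min_poly[OF K \<open>x \<in> K\<close>] .
    ultimately obtain t where t: "\<gamma> \<in> gen_field (\<gamma> + of_rat t * x)" "x \<in> gen_field (\<gamma> + of_rat t * x)"
      by (rule primitive_element_pair)
    have "gen_field \<gamma> \<subseteq> gen_field (\<gamma> + of_rat t * x)"
      using gen_field_least[OF subfield_gen_field t(1)] .
    moreover have "\<gamma> + of_rat t * x \<in> K"
      using \<open>\<gamma> \<in> K\<close> \<open>x \<in> K\<close> by (intro K.add_mem K.mult_mem K.of_rat_mem)
    ultimately show ?case
      using t(2) \<open>T \<subseteq> gen_field \<gamma>\<close> by blast
  qed
  then obtain \<theta> where "\<theta> \<in> K" "B \<subseteq> gen_field \<theta>"
    using B(1,2) by blast
  have "gen_field \<theta> = K"
  proof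
    show "gen_field \<theta> \<subseteq> K"
      by (rule gen_field_least[OF K.subfield_axioms \<open>\<theta> \<in> K\<close>])
    interpret T: subfield "gen_field \<theta>"
      by (rule subfield_gen_field)
    show "K \<subseteq> gen_field \<theta>"
    proof
      fix y assume "y \<in> K"
      then obtain c :: "real \<Rightarrow> rat" where "y = (\<Sum>v\<in>B. of_rat (c v) * v)"
        using B(3) by blast
      then show "y \<in> gen_field \<theta>"
        using \<open>B \<subseteq> gen_field \<theta>\<close> by (auto intro!: T.sum_mem T.mult_mem T.of_rat_mem)
    qed
  qed
  show thesis
  proof (cases "\<theta> = 0")
    case True
    then show thesis
      using that[of "\<theta> + 1"] \<open>gen_field \<theta> = K\<close> gen_field_add_one[of \<theta>] by simp
  qed (use that \<open>gen_field \<theta> = K\<close> in blast)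
qed

lemma gen_field_rat_poly_value:
  fixes m :: "complex poly"
  assumes "is_min_poly \<rat> (of_real \<theta>) m" "a \<in> gen_field \<theta>"
  obtains h :: "complex poly" where "poly_over \<rat> h" "poly h (of_real \<theta>) = of_real a"
proof -
  let ?V = "{poly h (of_real \<theta>) | h :: complex poly. poly_over \<rat> h}"
  have "subfield (of_real -` ?V :: real set)"
    by (rule subfield_vimage_of_real[OF Rats.subfield_poly_values[OF assms(1)]])
  moreover have "\<theta> \<in> of_real -` ?V"
    using Rats.poly_over_pCons[OF Rats.zero_mem Rats.poly_over_1] by (force simp: one_pCons)
  ultimately have "a \<in> of_real -` ?V"
    using gen_field_least assms(2) by blast
  with that show thesis
    by auto
qed

lemma mem_gen_field_scaled_square:
  fixes \<theta> a :: real and m h :: "complex poly"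
  assumes min: "is_min_poly \<rat> (of_real \<theta>) m"
    and h: "poly_over \<rat> h" "poly h (of_real \<theta>) = of_real a"
    and separating: "\<And>z. poly m z = 0 \<Longrightarrow> z \<noteq> of_real \<theta> \<Longrightarrow>
      poly h z * (1 + of_rat t * z)\<^sup>2 \<noteq> of_real (a * (1 + of_rat t * \<theta>)\<^sup>2)"
  shows "\<theta> \<in> gen_field (a * (1 + of_rat t * \<theta>)\<^sup>2)"
proof -
  define u where "u = a * (1 + of_rat t * \<theta>)\<^sup>2"
  define L where "L = gen_field u"
  interpret L: subfield L
    unfolding L_def by (rule subfield_gen_field)
  interpret S: subfield "of_real ` L :: complex set"
    by (rule subfield_image_of_real) (rule L.subfield_axioms)
  define p where "p = h * [:1, of_rat t:]\<^sup>2 - [:of_real u:]"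
  have poly_p: "poly p z = poly h z * (1 + of_rat t * z)\<^sup>2 - of_real u" for z
    unfolding p_def by (simp add: algebra_simps power2_eq_square)
  have "of_real u \<in> (of_real ` L :: complex set)"
    unfolding L_def using gen_field_self by blast
  then have "poly_over (of_real ` L) p"
    unfolding p_def using h(1) S.Rats_subset
    by (intro S.poly_over_diff S.poly_over_mult S.poly_over_power S.poly_over_pCons S.poly_over_const
        S.one_mem S.of_rat_mem S.poly_over_0) (auto intro: poly_over_mono)
  moreover have "poly p (of_real \<theta>) = 0"
    unfolding poly_p u_def using h(2) by (simp flip: of_real_of_rat)
  moreover have "z = of_real \<theta>" if "poly p z = 0" "poly m z = 0" for z
    using separating[OF that(2)] that(1) unfolding poly_p u_def by auto
  ultimately have "\<theta> \<in> L"
    by (rule unique_common_root_mem[OF L.subfield_axioms min])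
  then show ?thesis
    unfolding L_def u_def .
qed

lemma square_class_generator:
  fixes \<theta> a :: real and m :: "complex poly"
  assumes min: "is_min_poly \<rat> (of_real \<theta>) m" and "\<theta> \<noteq> 0" "a \<in> gen_field \<theta>" "a \<noteq> 0"
  obtains x where "x \<in> gen_field \<theta>" "gen_field (x\<^sup>2 / a) = gen_field \<theta>" "x\<^sup>2 / a \<noteq> 1"
proof -
  obtain h :: "complex poly" where h: "poly_over \<rat> h" "poly h (of_real \<theta>) = of_real a"
    using gen_field_rat_poly_value[OF min \<open>a \<in> gen_field \<theta>\<close>] .
  have "m \<noteq> 0"
    using min by (auto simp: is_min_poly_def)
  define c\<theta> :: complex where "c\<theta> = of_real \<theta>"
  define ca :: complex where "ca = of_real a"
  have "c\<theta> \<noteq> 0" "ca \<noteq> 0"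
    using assms by (auto simp: c\<theta>_def ca_def)
  \<comment> \<open>The values of \<open>t\<close> to avoid: the roots of \<open>Q r\<close> for the conjugates \<open>r \<noteq> \<theta>\<close>, where \<open>r\<close>
    would be another common root, and the roots of \<open>Q1\<close>, where \<open>u = 1\<close>.\<close>
  define Q where "Q r = [:poly h r - ca, 2 * (poly h r * r - ca * c\<theta>), poly h r * r\<^sup>2 - ca * c\<theta>\<^sup>2:]"
    for r
  have poly_Q: "poly (Q r) s = poly h r * (1 + s * r)\<^sup>2 - ca * (1 + s * c\<theta>)\<^sup>2" for r s
    unfolding Q_def by (simp add: algebra_simps power2_eq_square)
  have Q_nonzero: "Q r \<noteq> 0" if "r \<noteq> c\<theta>" for r
  proof
    assume "Q r = 0"
    then have "poly h r = ca" "poly h r * r = ca * c\<theta>"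
      unfolding Q_def by auto
    with \<open>ca \<noteq> 0\<close> that show False
      by simp
  qed
  define Q1 where "Q1 = [:ca - 1, 2 * ca * c\<theta>, ca * c\<theta>\<^sup>2:]"
  have poly_Q1: "poly Q1 s = ca * (1 + s * c\<theta>)\<^sup>2 - 1" for s
    unfolding Q1_def by (simp add: algebra_simps power2_eq_square)
  have "Q1 \<noteq> 0"
    unfolding Q1_def using \<open>c\<theta> \<noteq> 0\<close> \<open>ca \<noteq> 0\<close> by simp
  define Bad where "Bad = (\<Union>r \<in> {z. poly m z = 0} - {c\<theta>}. {s. poly (Q r) s = 0}) \<union> {s. poly Q1 s = 0}"
  have "finite Bad"
    unfolding Bad_def using poly_roots_finite[OF \<open>m \<noteq> 0\<close>] poly_roots_finite[OF Q_nonzero]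
      poly_roots_finite[OF \<open>Q1 \<noteq> 0\<close>] by auto
  then obtain t where t: "of_rat t \<notin> Bad"
    by (rule ex_of_rat_notin)
  define x where "x = a * (1 + of_rat t * \<theta>)"
  have u: "x\<^sup>2 / a = a * (1 + of_rat t * \<theta>)\<^sup>2"
    unfolding x_def using \<open>a \<noteq> 0\<close> by (simp add: power2_eq_square)
  have "poly Q1 (of_rat t) = of_real (x\<^sup>2 / a - 1)"
    unfolding poly_Q1 u ca_def c\<theta>_def by (simp flip: of_real_of_rat)
  moreover have "poly Q1 (of_rat t) \<noteq> 0"
    using t unfolding Bad_def by auto
  ultimately have "x\<^sup>2 / a \<noteq> 1"
    by auto
  have "poly (Q z) (of_rat t) = poly h z * (1 + of_rat t * z)\<^sup>2 - of_real (x\<^sup>2 / a)" for z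
    unfolding poly_Q u ca_def c\<theta>_def by (simp add: mult.commute flip: of_real_of_rat)
  then have "\<theta> \<in> gen_field (x\<^sup>2 / a)"
    unfolding u using t unfolding Bad_def c\<theta>_def
    by (intro mem_gen_field_scaled_square[OF min h]) auto
  interpret T: subfield "gen_field \<theta>"
    by (rule subfield_gen_field)
  have "x \<in> gen_field \<theta>"
    unfolding x_def using \<open>a \<in> gen_field \<theta>\<close> gen_field_self[of \<theta>]
    by (intro T.mult_mem T.add_mem T.one_mem T.of_rat_mem)
  then have "x\<^sup>2 / a \<in> gen_field \<theta>"
    using \<open>a \<in> gen_field \<theta>\<close> by (intro T.divide_mem T.power_mem)
  with \<open>\<theta> \<in> gen_field (x\<^sup>2 / a)\<close> have "gen_field (x\<^sup>2 / a) = gen_field \<theta>"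
    by (rule gen_field_eqI)
  with \<open>x \<in> gen_field \<theta>\<close> \<open>x\<^sup>2 / a \<noteq> 1\<close> show thesis
    using that by blast
qed

theorem lemma3p3:
  fixes K :: "real set" and a b :: real
  assumes "real_number_field K"
    and "a \<in> K" and "b \<in> K" and "a \<noteq> 0" and "b \<noteq> 0" and "a > 0"
  shows "\<exists>g m1 m2 m3 m4 m5. g \<in> K \<and> gen_field g = K \<and> g \<noteq> 1 \<and>
           m1 \<in> K \<and> m2 \<in> K \<and> m3 \<in> K \<and> m4 \<in> K \<and> m5 \<in> K \<and> m2 \<noteq> m3 \<and>
           (1 / a) * (m1 / (m2 - m3))^2 - (b / a) * (m4 / (m2 - m3))^2
             + b * (m5 / (m2 - m3))^2 = 1 + 2 / (g - 1)"
proof -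
  obtain \<theta> where "\<theta> \<noteq> 0" and gen_\<theta>: "gen_field \<theta> = K"
    using real_number_field_primitive_element[OF assms(1)] .
  then obtain m :: "complex poly" where min: "is_min_poly \<rat> (of_real \<theta>) m"
    using real_number_field_min_poly[OF assms(1)] gen_field_self[of \<theta>] by blast
  obtain x where "x \<in> K" "gen_field (x\<^sup>2 / a) = K" and u: "x\<^sup>2 / a \<noteq> 1"
    using square_class_generator[OF min \<open>\<theta> \<noteq> 0\<close> _ assms(4)] assms(2) unfolding gen_\<theta> by blast
  define g where "g = (x\<^sup>2 / a + 1) / (x\<^sup>2 / a - 1)"
  have "gen_field g = K"
    unfolding g_def gen_field_ratio_plus_minus_one[OF u] by fact
  moreover have "g \<noteq> 1" "1 + 2 / (g - 1) = x\<^sup>2 / a"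
    using u unfolding g_def by (simp_all add: field_simps)
  moreover have "0 \<in> K" "1 \<in> K"
    using real_number_field_subfield[OF assms(1)] by (simp_all add: subfield.zero_mem subfield.one_mem)
  ultimately show ?thesis
    using gen_field_self[of g] \<open>x \<in> K\<close>
    by (intro exI[of _ g] exI[of _ x] exI[of _ 1] exI[of _ 0] exI[of _ 0] exI[of _ 0]) simp
qed

end
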